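(* Let $y$ be a string whose last character occurs nowhere else in $y$, and let $\mathrm{BT}(y)$ be the trie consisting only of the black nodes of $\mathrm{AST}(y)$ (i.e., the trie of the set $\mathcal{R}$). Then every leaf $\ell$ of $\mathrm{BT}(y)$ is a node of the suffix tree $\mathrm{ST}(y)$, i.e., $\ell\in\mathcal{L}$.
   Context: $\mathrm{Substr}(y)$ is the set of substrings of $y$. $\mathrm{BegPos}(x)=\{i\mid y[i..i+|x|-1]=x\}$, $\mathrm{EndPos}(x)=\{i\mid y[i-|x|+1..i]=x\}$. For $x\in\mathrm{Substr}(y)$, $\overrightarrow{x}$ is the longest $z$ with $\mathrm{BegPos}(z)=\mathrm{BegPos}(x)$ and $\overleftarrow{x}$ is the longest $z$ with $\mathrm{EndPos}(z)=\mathrm{EndPos}(x)$. $\mathcal{L}=\{\overrightarrow{x}\mid x\in\mathrm{Substr}(y)\}$ is the node set of the suffix tree $\mathrm{ST}(y)$, and $\mathcal{R}=\{\overleftarrow{x}\mid x\in\mathrm{Substr}(y)\}$. $\mathrm{AST}(y)$ is the rooted tree on node set $\mathcal{L}\cup\mathcal{R}$ in which the parent of each non-root node is its longest proper prefix in $\mathcal{L}\cup\mathcal{R}$; a node is black iff it belongs to $\mathcal{R}$. The set $\mathcal{R}$ is prefix-closed, and a leaf of $\mathrm{BT}(y)$ is an element of $\mathcal{R}$ that is not a proper prefix of any other element of $\mathcal{R}$. *)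

theory Defs
  imports Main "HOL-Library.Sublist"
begin

text \<open>Strings are lists; positions are 0-based.\<close>

definition Substr :: "'a list \<Rightarrow> 'a list set" where
  "Substr y = {x. \<exists>u v. y = u @ x @ v}"

definition BegPos :: "'a list \<Rightarrow> 'a list \<Rightarrow> nat set" where
  "BegPos y x = {i. i + length x \<le> length y \<and> take (length x) (drop i y) = x}"

text \<open>End positions, recorded as the (exclusive) index j with y[j-|x|..j-1] = x,
  i.e. the informal end position i = j-1 shifted by one (so that the empty string
  has a well-defined end position set).\<close>
definition EndPos :: "'a list \<Rightarrow> 'a list \<Rightarrow> nat set" where
  "EndPos y x = {j. length x \<le> j \<and> j \<le> length y \<and> take (length x) (drop (j - length x) y) = x}"

definition is_rext :: "'a list \<Rightarrow> 'a list \<Rightarrow> 'a list \<Rightarrow> bool" where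
  "is_rext y x z \<longleftrightarrow> BegPos y z = BegPos y x \<and>
     (\<forall>w. BegPos y w = BegPos y x \<longrightarrow> length w \<le> length z)"

definition is_lext :: "'a list \<Rightarrow> 'a list \<Rightarrow> 'a list \<Rightarrow> bool" where
  "is_lext y x z \<longleftrightarrow> EndPos y z = EndPos y x \<and>
     (\<forall>w. EndPos y w = EndPos y x \<longrightarrow> length w \<le> length z)"

text \<open>Node set of the suffix tree ST(y).\<close>
definition Lset :: "'a list \<Rightarrow> 'a list set" where
  "Lset y = {z. \<exists>x\<in>Substr y. is_rext y x z}"

text \<open>Black nodes (node set of BT(y)).\<close>
definition Rset :: "'a list \<Rightarrow> 'a list set" where
  "Rset y = {z. \<exists>x\<in>Substr y. is_lext y x z}"

definition BT_leaf :: "'a list \<Rightarrow> 'a list \<Rightarrow> bool" where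
  "BT_leaf y l \<longleftrightarrow> l \<in> Rset y \<and> \<not> (\<exists>r\<in>Rset y. strict_prefix l r)"

end

theory Submission
  imports Defs
begin

text \<open>A leaf \<open>l\<close> of \<open>BT(y)\<close> is the longest string with its set of end positions. If
  \<open>l\<close> were not a node of \<open>ST(y)\<close>, some proper extension \<open>l @ z\<close> would have the same begin
  positions; its end positions are then those of \<open>l\<close> shifted by \<open>|z|\<close>, so a longer string
  with the end positions of \<open>l @ z\<close> would, after cutting off \<open>z\<close>, be a longer string with
  the end positions of \<open>l\<close>. Hence \<open>l @ z\<close> is black, contradicting that \<open>l\<close> is a leaf.\<close>

lemma BegPos_iff: "i \<in> BegPos y x \<longleftrightarrow> (\<exists>u v. y = u @ x @ v \<and> length u = i)"
proof
  assume "i \<in> BegPos y x"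
  then have "i + length x \<le> length y" "take (length x) (drop i y) = x"
    by (auto simp: BegPos_def)
  then have "y = take i y @ x @ drop (length x) (drop i y)" "length (take i y) = i"
    by (metis append_take_drop_id, simp)
  then show "\<exists>u v. y = u @ x @ v \<and> length u = i"
    by blast
qed (auto simp: BegPos_def)

lemma EndPos_iff: "j \<in> EndPos y x \<longleftrightarrow> (\<exists>u v. y = u @ x @ v \<and> length u + length x = j)"
proof
  assume "j \<in> EndPos y x"
  then have "length x \<le> j" "j - length x \<in> BegPos y x"
    by (auto simp: EndPos_def BegPos_def)
  then show "\<exists>u v. y = u @ x @ v \<and> length u + length x = j"
    unfolding BegPos_iff by auto
qed (auto simp: EndPos_def)

lemma Substr_iff_BegPos: "x \<in> Substr y \<longleftrightarrow> BegPos y x \<noteq> {}"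
  unfolding Substr_def mem_Collect_eq ex_in_conv[symmetric] BegPos_iff by auto

lemma Substr_iff_EndPos: "x \<in> Substr y \<longleftrightarrow> EndPos y x \<noteq> {}"
  unfolding Substr_def mem_Collect_eq ex_in_conv[symmetric] EndPos_iff by auto

lemma EndPos_conv_BegPos: "EndPos y x = (\<lambda>i. i + length x) ` BegPos y x"
  unfolding set_eq_iff EndPos_iff image_iff Bex_def BegPos_iff by auto

lemma EndPos_append_left_subset: "EndPos y (s @ x) \<subseteq> EndPos y x"
proof
  fix j assume "j \<in> EndPos y (s @ x)"
  then obtain u v where "y = (u @ s) @ x @ v" "length (u @ s) + length x = j"
    unfolding EndPos_iff by auto
  then show "j \<in> EndPos y x"
    unfolding EndPos_iff by blast
qed

lemma EndPos_append_rightD: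
  assumes "j + length z \<in> EndPos y (x @ z)"
  shows "j \<in> EndPos y x"
proof -
  from assms obtain u v where "y = u @ x @ z @ v" "length u + length x = j"
    unfolding EndPos_iff by auto
  then show ?thesis
    unfolding EndPos_iff by blast
qed

lemma EndPos_append_if_same_BegPos:
  assumes "BegPos y (x @ z) = BegPos y x"
  shows "EndPos y (x @ z) = (\<lambda>j. j + length z) ` EndPos y x"
  using assms by (simp add: EndPos_conv_BegPos image_image add.assoc)

lemma prefix_if_same_BegPos:
  assumes "BegPos y x = BegPos y w" "x \<in> Substr y" "length x \<le> length w"
  shows "prefix x w"
proof -
  from assms(1,2) obtain i where "i \<in> BegPos y x" "i \<in> BegPos y w"
    by (auto simp: Substr_iff_BegPos)
  then have x: "take (length x) (drop i y) = x" and w: "take (length w) (drop i y) = w"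
    by (auto simp: BegPos_def)
  have "take (length x) w = take (length x) (take (length w) (drop i y))"
    using w by simp
  also have "\<dots> = x"
    using x assms(3) by (simp add: min_absorb1)
  finally show ?thesis
    using take_is_prefix[of "length x" w] by simp
qed

lemma suffix_if_same_EndPos:
  assumes "EndPos y x = EndPos y w" "x \<in> Substr y" "length x \<le> length w"
  shows "suffix x w"
proof -
  from assms(1,2) obtain j where "j \<in> EndPos y x" "j \<in> EndPos y w"
    by (auto simp: Substr_iff_EndPos)
  then obtain u v u' v' where y: "y = u @ x @ v" "y = u' @ w @ v'"
    and j: "length u + length x = j" "length u' + length w = j"
    unfolding EndPos_iff by blast
  have "u @ x = take j y"
    using y(1) j(1) by simp
  also have "\<dots> = u' @ w"
    using y(2) j(2) by simp
  finally have "suffix x (u' @ w)"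
    by (metis suffix_def)
  then show ?thesis
    using suffix_length_suffix[of x "u' @ w" w] assms(3) by (simp add: suffix_def)
qed

lemma Rset_iff: "z \<in> Rset y \<longleftrightarrow> z \<in> Substr y \<and> is_lext y z z"
  unfolding Rset_def mem_Collect_eq
proof
  assume "\<exists>x\<in>Substr y. is_lext y x z"
  then obtain x where "x \<in> Substr y" "is_lext y x z"
    by blast
  then show "z \<in> Substr y \<and> is_lext y z z"
    by (simp add: is_lext_def Substr_iff_EndPos)
qed blast

lemma Lset_iff: "z \<in> Lset y \<longleftrightarrow> z \<in> Substr y \<and> is_rext y z z"
  unfolding Lset_def mem_Collect_eq
proof
  assume "\<exists>x\<in>Substr y. is_rext y x z"
  then obtain x where "x \<in> Substr y" "is_rext y x z"
    by blast
  then show "z \<in> Substr y \<and> is_rext y z z"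
    by (simp add: is_rext_def Substr_iff_BegPos)
qed blast

lemma is_lext_append_if_same_BegPos:
  assumes lext: "is_lext y x x" and x: "x \<in> Substr y"
    and same: "BegPos y (x @ z) = BegPos y x"
  shows "is_lext y (x @ z) (x @ z)"
  unfolding is_lext_def
proof (intro conjI allI impI refl)
  fix v assume v: "EndPos y v = EndPos y (x @ z)"
  show "length v \<le> length (x @ z)"
  proof (rule ccontr)
    assume long: "\<not> length v \<le> length (x @ z)"
    have "x @ z \<in> Substr y"
      using x same by (simp add: Substr_iff_BegPos)
    then have "suffix (x @ z) v"
      using v long by (intro suffix_if_same_EndPos) auto
    then obtain s where s: "v = (s @ x) @ z"
      by (auto simp: suffix_def)
    have "EndPos y x \<subseteq> EndPos y (s @ x)"
    proof
      fix j assume "j \<in> EndPos y x"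
      then have "j + length z \<in> EndPos y ((s @ x) @ z)"
        using v same s by (simp add: EndPos_append_if_same_BegPos)
      then show "j \<in> EndPos y (s @ x)"
        by (rule EndPos_append_rightD)
    qed
    then have "EndPos y (s @ x) = EndPos y x"
      using EndPos_append_left_subset by blast
    then have "s = []"
      using lext by (auto simp: is_lext_def)
    with long s show False
      by simp
  qed
qed

theorem lemma5:
  fixes y :: "'a list" and l :: "'a list"
  assumes "y \<noteq> []"
    and "last y \<notin> set (butlast y)"
    and "BT_leaf y l"
  shows "l \<in> Lset y"
proof -
  have l: "l \<in> Substr y" "is_lext y l l" and leaf: "\<not> (\<exists>r\<in>Rset y. strict_prefix l r)"
    using assms(3) by (auto simp: BT_leaf_def Rset_iff)
  have "length w \<le> length l" if same: "BegPos y w = BegPos y l" for w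
  proof (rule ccontr)
    assume long: "\<not> length w \<le> length l"
    then obtain z where w: "w = l @ z"
      using prefix_if_same_BegPos[OF same[symmetric] l(1)] by (auto simp: prefix_def)
    have "w \<in> Rset y"
      using l same is_lext_append_if_same_BegPos[of y l z]
      by (simp add: w Rset_iff Substr_iff_BegPos)
    moreover have "strict_prefix l w"
      using long w by (auto simp: strict_prefix_def)
    ultimately show False
      using leaf by blast
  qed
  then show ?thesis
    using l(1) by (simp add: Lset_iff is_rext_def)
qed

end
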